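(* For each $n\in\omega$ the set $N_n:=\{x\in 3^\omega: x(i)\neq 2 \text{ for all } i\geq n\}$ is $\mathbb{T}$-nowhere dense, but $\bigcup_{n\in\omega}N_n$ is not $\mathbb{T}$-nowhere dense.
   Context: $\mathbb{T}$ is the tree-forcing (ordered by inclusion) consisting of perfect trees $p\subseteq 3^{<\omega}$ together with a set $A_p\subseteq\omega$ (the splitting levels of $p$) such that: for every $t\in p$, $|t|\in A_p$ iff $t$ is a splitting node of $p$; every splitting node $t$ is fully splitting (i.e. $t^\frown i\in p$ for every $i\in 3$); for every $s\supseteq \mathrm{stem}(p)$ which is not splitting, $s^\frown 2\notin p$; and for all non-splitting $s,t\in p$ with $|s|=|t|$ and all $i\in 2$, $s^\frown i\in p\Leftrightarrow t^\frown i\in p$. Here $s^\frown i$ denotes $s$ extended by the value $i$. A set $X$ is $\mathbb{T}$-nowhere dense if for every $p\in\mathbb{T}$ there is $q\leq p$ with $[q]\cap X=\emptyset$, where $[q]$ is the set of branches of $q$. *)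

theory Defs
  imports Main "HOL-Library.Sublist"
begin

definition seq3 :: "nat list set" where
  "seq3 = {s. \<forall>i\<in>set s. i < 3}"

definition cantor3 :: "(nat \<Rightarrow> nat) set" where
  "cantor3 = {x. \<forall>n. x n < 3}"

definition is_tree :: "nat list set \<Rightarrow> bool" where
  "is_tree p \<longleftrightarrow> p \<subseteq> seq3 \<and> p \<noteq> {} \<and> (\<forall>s\<in>p. \<forall>t. prefix t s \<longrightarrow> t \<in> p)"

definition splitting :: "nat list set \<Rightarrow> nat list \<Rightarrow> bool" where
  "splitting p t \<longleftrightarrow> t \<in> p \<and> (\<exists>i j. i \<noteq> j \<and> t @ [i] \<in> p \<and> t @ [j] \<in> p)"

definition fully_splitting :: "nat list set \<Rightarrow> nat list \<Rightarrow> bool" where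
  "fully_splitting p t \<longleftrightarrow> (\<forall>i<3. t @ [i] \<in> p)"

definition perfect_tree :: "nat list set \<Rightarrow> bool" where
  "perfect_tree p \<longleftrightarrow> is_tree p \<and> (\<forall>s\<in>p. \<exists>t\<in>p. prefix s t \<and> splitting p t)"

definition stem :: "nat list set \<Rightarrow> nat list" where
  "stem p = (THE t. splitting p t \<and> (\<forall>u\<in>p. prefix u t \<or> prefix t u))"

definition T_forcing :: "(nat list set \<times> nat set) set" where
  "T_forcing = {(p, A). perfect_tree p
     \<and> (\<forall>t\<in>p. length t \<in> A \<longleftrightarrow> splitting p t)
     \<and> (\<forall>t. splitting p t \<longrightarrow> fully_splitting p t)
     \<and> (\<forall>s\<in>p. prefix (stem p) s \<and> \<not> splitting p s \<longrightarrow> s @ [2] \<notin> p)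
     \<and> (\<forall>s\<in>p. \<forall>t\<in>p. \<not> splitting p s \<and> \<not> splitting p t \<and> length s = length t
          \<longrightarrow> (\<forall>i<2. s @ [i] \<in> p \<longleftrightarrow> t @ [i] \<in> p))}"

definition T_le :: "(nat list set \<times> nat set) \<Rightarrow> (nat list set \<times> nat set) \<Rightarrow> bool" where
  "T_le q p \<longleftrightarrow> fst q \<subseteq> fst p"

definition branches :: "nat list set \<Rightarrow> (nat \<Rightarrow> nat) set" where
  "branches p = {x \<in> cantor3. \<forall>n. map x [0..<n] \<in> p}"

definition T_nowhere_dense :: "(nat \<Rightarrow> nat) set \<Rightarrow> bool" where
  "T_nowhere_dense X \<longleftrightarrow>
     (\<forall>p\<in>T_forcing. \<exists>q\<in>T_forcing. T_le q p \<and> branches (fst q) \<inter> X = {})"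

definition N_set :: "nat \<Rightarrow> (nat \<Rightarrow> nat) set" where
  "N_set n = {x \<in> cantor3. \<forall>i\<ge>n. x i \<noteq> 2}"

end

theory Submission
  imports Defs
begin

(* N_n is nowhere dense: every condition p has a fully splitting node t of length at least n, and
   restricting p to the nodes comparable with t @ [2] gives a condition all of whose branches take
   the value 2 at position |t| >= n.
   The union is not nowhere dense, since every condition p has a branch in it: above the stem,
   follow 0 at splitting nodes and the unique child at non-splitting ones, which is never 2. *)

lemma T_forcingD:
  assumes "(p, A) \<in> T_forcing"
  shows T_forcing_perfect: "perfect_tree p"
    and T_forcing_levels: "\<And>t. t \<in> p \<Longrightarrow> length t \<in> A \<longleftrightarrow> splitting p t"
    and T_forcing_fully_splitting: "\<And>t. splitting p t \<Longrightarrow> fully_splitting p t"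
    and T_forcing_no_2: "\<And>s. s \<in> p \<Longrightarrow> prefix (stem p) s \<Longrightarrow> \<not> splitting p s \<Longrightarrow> s @ [2] \<notin> p"
    and T_forcing_uniform: "\<And>s t i. s \<in> p \<Longrightarrow> t \<in> p \<Longrightarrow> \<not> splitting p s \<Longrightarrow> \<not> splitting p t
          \<Longrightarrow> length s = length t \<Longrightarrow> i < 2 \<Longrightarrow> s @ [i] \<in> p \<longleftrightarrow> t @ [i] \<in> p"
  using assms unfolding T_forcing_def by blast+

lemma full_tree_T_forcing: "(seq3, UNIV) \<in> T_forcing"
proof -
  have child: "t @ [i] \<in> seq3" if "t \<in> seq3" "i < 3" for t i
    using that by (simp add: seq3_def)
  have splitting_iff: "splitting seq3 t \<longleftrightarrow> t \<in> seq3" for t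
  proof
    assume "t \<in> seq3"
    then show "splitting seq3 t"
      unfolding splitting_def using child[of t 0] child[of t 1] zero_neq_one by fastforce
  qed (simp add: splitting_def)
  have "[] \<in> seq3" by (simp add: seq3_def)
  moreover have "t \<in> seq3" if "s \<in> seq3" "prefix t s" for s t
    using that set_mono_prefix unfolding seq3_def by blast
  ultimately have "is_tree seq3"
    unfolding is_tree_def by blast
  then have "perfect_tree seq3"
    unfolding perfect_tree_def splitting_iff by blast
  then show ?thesis
    unfolding T_forcing_def mem_Collect_eq case_prod_conv splitting_iff fully_splitting_def
    using child by blast
qed

lemma tree_prefix_closed: "is_tree p \<Longrightarrow> s \<in> p \<Longrightarrow> prefix t s \<Longrightarrow> t \<in> p"
  unfolding is_tree_def by blast

subsection \<open>Perfect trees\<close>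

lemma perfect_tree_child:
  assumes "perfect_tree p" "s \<in> p"
  obtains i where "s @ [i] \<in> p"
proof -
  obtain u where u: "u \<in> p" "prefix s u" "splitting p u"
    using assms unfolding perfect_tree_def by blast
  show thesis
  proof (cases "u = s")
    case True
    with u that show ?thesis by (auto simp: splitting_def)
  next
    case False
    with u(2) have "strict_prefix s u" by (simp add: strict_prefix_def)
    then obtain c cs where "u = s @ c # cs" by (rule strict_prefixE')
    then have "s @ [c] \<in> p"
      using assms(1) u(1) by (auto simp: perfect_tree_def intro: tree_prefix_closed)
    with that show ?thesis .
  qed
qed

lemma perfect_tree_deep_splitting:
  assumes "perfect_tree p"
  obtains t where "splitting p t" "n \<le> length t"
proof (induction n arbitrary: thesis)
  case 0
  from assms obtain s where "s \<in> p" by (auto simp: perfect_tree_def is_tree_def)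
  with assms 0 show ?case by (auto simp: perfect_tree_def)
next
  case (Suc n)
  then obtain t where t: "splitting p t" "n \<le> length t" by blast
  then obtain i where "t @ [i] \<in> p" unfolding splitting_def by blast
  then obtain u where "prefix (t @ [i]) u" "splitting p u"
    using assms unfolding perfect_tree_def by blast
  with t Suc.prems show ?case by (fastforce dest: prefix_length_le)
qed

lemma prefix_splitting_if_comparable:
  assumes "splitting p t" and comparable: "\<forall>u\<in>p. prefix u x \<or> prefix x u"
  shows "prefix x t"
proof (rule ccontr)
  assume not_prefix: "\<not> prefix x t"
  obtain i j where ij: "i \<noteq> j" "t @ [i] \<in> p" "t @ [j] \<in> p" and "t \<in> p"
    using assms(1) unfolding splitting_def by blast
  have "strict_prefix t x"
    using comparable \<open>t \<in> p\<close> not_prefix by (auto simp: strict_prefix_def)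
  then obtain c cs where x: "x = t @ c # cs"
    by (rule strict_prefixE')
  have "k = c" if "t @ [k] \<in> p" for k
    using comparable[rule_format, OF that] by (auto simp: x)
  with ij show False by blast
qed

lemma minimal_splitting_comparable:
  assumes "is_tree p" "splitting p s" and minimal: "\<And>t. splitting p t \<Longrightarrow> length s \<le> length t"
    and "u \<in> p"
  shows "prefix u s \<or> prefix s u"
proof (rule ccontr)
  assume "\<not> (prefix u s \<or> prefix s u)"
  then obtain as b bs c cs where "b \<noteq> c" "u = as @ b # bs" "s = as @ c # cs"
    using parallel_decomp by (metis parallel_def)
  moreover have "s \<in> p" using assms(2) by (simp add: splitting_def)
  ultimately have "splitting p as"
    using tree_prefix_closed[OF assms(1)] \<open>u \<in> p\<close> unfolding splitting_def
    by (metis append.assoc append_Cons append_Nil prefix_def)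
  with minimal \<open>s = as @ c # cs\<close> show False by fastforce
qed

lemma perfect_tree_stem:
  assumes "perfect_tree p"
  shows "splitting p (stem p) \<and> (\<forall>u\<in>p. prefix u (stem p) \<or> prefix (stem p) u)"
proof -
  have tree: "is_tree p" using assms by (simp add: perfect_tree_def)
  then obtain s where "s \<in> p" unfolding is_tree_def by blast
  then obtain t where "splitting p t" using assms unfolding perfect_tree_def by blast
  then obtain s0 where s0: "splitting p s0" and minimal: "\<And>t. splitting p t \<Longrightarrow> length s0 \<le> length t"
    using ex_has_least_nat[of "splitting p" t length] by blast
  have comparable: "\<forall>u\<in>p. prefix u s0 \<or> prefix s0 u"
    using minimal_splitting_comparable[OF tree s0 minimal] by blast
  have "stem p = s0" unfolding stem_def
  proof (rule the_equality)
    fix t assume t: "splitting p t \<and> (\<forall>u\<in>p. prefix u t \<or> prefix t u)"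
    then show "t = s0"
      using prefix_splitting_if_comparable[OF s0] prefix_splitting_if_comparable[OF _ comparable]
      by (blast intro: prefix_order.antisym)
  qed (use s0 comparable in blast)
  with s0 comparable show ?thesis by simp
qed

lemma stem_splitting: "perfect_tree p \<Longrightarrow> splitting p (stem p)"
  using perfect_tree_stem by blast

lemma prefix_stem_splitting: "perfect_tree p \<Longrightarrow> splitting p t \<Longrightarrow> prefix (stem p) t"
  using perfect_tree_stem prefix_splitting_if_comparable by blast

subsection \<open>Restriction of a tree to the nodes comparable with a node\<close>

definition subtree :: "nat list set \<Rightarrow> nat list \<Rightarrow> nat list set" where
  "subtree p t = {s \<in> p. prefix s t \<or> prefix t s}"

lemma subtree_subset: "subtree p t \<subseteq> p"
  by (auto simp: subtree_def)

lemma prefix_iff_length_le_subtree: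
  "s \<in> subtree p t \<Longrightarrow> prefix t s \<longleftrightarrow> length t \<le> length s"
  unfolding subtree_def
  by (metis (mono_tags) mem_Collect_eq prefix_length_le prefix_length_prefix prefix_order.refl)

lemma subtree_child_iff: "prefix t s \<Longrightarrow> s @ [i] \<in> subtree p t \<longleftrightarrow> s @ [i] \<in> p"
  by (auto simp: subtree_def prefix_def)

lemma splitting_subtree_iff: "splitting (subtree p t) v \<longleftrightarrow> splitting p v \<and> prefix t v"
proof
  assume split: "splitting (subtree p t) v"
  then obtain i j where ij: "i \<noteq> j" "v @ [i] \<in> subtree p t" "v @ [j] \<in> subtree p t"
    and v: "v \<in> subtree p t"
    unfolding splitting_def by blast
  have "prefix t v"
  proof (rule ccontr)
    assume "\<not> prefix t v"
    then have "length v < length t"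
      using prefix_iff_length_le_subtree[OF v] by simp
    have "prefix (v @ [k]) t" if "v @ [k] \<in> subtree p t" for k
    proof -
      from that have "prefix (v @ [k]) t \<or> prefix t (v @ [k])" by (simp add: subtree_def)
      with \<open>length v < length t\<close> show ?thesis
        using prefix_length_prefix[of "v @ [k]" "v @ [k]" t] by auto
    qed
    then have "prefix (v @ [i]) (v @ [j])"
      using ij prefix_length_prefix[of "v @ [i]" t "v @ [j]"] by simp
    with ij(1) show False
      by (auto dest: prefix_length_le)
  qed
  with split show "splitting p v \<and> prefix t v"
    using subtree_subset unfolding splitting_def by blast
next
  assume "splitting p v \<and> prefix t v"
  then show "splitting (subtree p t) v"
    unfolding splitting_def using subtree_child_iff[of t v] by (auto simp: subtree_def)
qed

lemma subtree_is_tree: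
  assumes "is_tree p" "t \<in> p"
  shows "is_tree (subtree p t)"
  unfolding is_tree_def
proof (intro conjI ballI allI impI)
  show "subtree p t \<subseteq> seq3"
    using assms(1) subtree_subset unfolding is_tree_def by blast
  have "[] \<in> p" using tree_prefix_closed[OF assms] by simp
  then show "subtree p t \<noteq> {}" by (auto simp: subtree_def)
next
  fix s r assume s: "s \<in> subtree p t" and r: "prefix r s"
  then have "r \<in> p"
    using tree_prefix_closed[OF assms(1)] subtree_subset by blast
  moreover have "prefix r t \<or> prefix t r"
    using s prefix_same_cases[OF r, of t] prefix_order.trans[OF r, of t]
    unfolding subtree_def by blast
  ultimately show "r \<in> subtree p t"
    unfolding subtree_def by blast
qed

lemma subtree_perfect:
  assumes "perfect_tree p" "t \<in> p"
  shows "perfect_tree (subtree p t)"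
  unfolding perfect_tree_def
proof (intro conjI ballI)
  show "is_tree (subtree p t)"
    using assms subtree_is_tree by (auto simp: perfect_tree_def)
next
  fix s assume s: "s \<in> subtree p t"
  define s' where "s' = (if prefix s t then t else s)"
  have s': "s' \<in> p" "prefix t s'" "prefix s s'"
    using s assms(2) by (auto simp: s'_def subtree_def)
  then obtain u where "prefix s' u" "splitting p u"
    using assms(1) unfolding perfect_tree_def by blast
  with s' have "splitting (subtree p t) u" "prefix s u"
    using splitting_subtree_iff by (blast intro: prefix_order.trans)+
  then show "\<exists>u\<in>subtree p t. prefix s u \<and> splitting (subtree p t) u"
    by (auto simp: splitting_def)
qed

lemma subtree_T_forcing:
  assumes pA: "(p, A) \<in> T_forcing" and "t \<in> p"
  shows "(subtree p t, {k \<in> A. length t \<le> k}) \<in> T_forcing"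
proof -
  let ?q = "subtree p t"
  have perfect: "perfect_tree ?q"
    using subtree_perfect[OF T_forcing_perfect[OF pA] \<open>t \<in> p\<close>] .
  have levels: "length v \<in> {k \<in> A. length t \<le> k} \<longleftrightarrow> splitting ?q v" if "v \<in> ?q" for v
    using that T_forcing_levels[OF pA] subtree_subset prefix_iff_length_le_subtree[OF that]
      splitting_subtree_iff by blast
  have fully_splitting: "fully_splitting ?q v" if "splitting ?q v" for v
    using that T_forcing_fully_splitting[OF pA] subtree_child_iff
    unfolding splitting_subtree_iff fully_splitting_def by blast
  have no_2: "s @ [2] \<notin> ?q"
    if "s \<in> ?q" "prefix (stem ?q) s" "\<not> splitting ?q s" for s
  proof -
    have "splitting p (stem ?q)" "prefix t (stem ?q)"
      using stem_splitting[OF perfect] splitting_subtree_iff by blast+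
    then have "prefix (stem p) s" "prefix t s"
      using that(2) prefix_stem_splitting[OF T_forcing_perfect[OF pA]]
      by (blast intro: prefix_order.trans)+
    with that show ?thesis
      using T_forcing_no_2[OF pA] subtree_subset splitting_subtree_iff by blast
  qed
  have uniform: "s @ [i] \<in> ?q \<longleftrightarrow> u @ [i] \<in> ?q"
    if "s \<in> ?q" "u \<in> ?q" "\<not> splitting ?q s" "\<not> splitting ?q u" "length s = length u" "i < 2"
    for s u i
  proof (cases "prefix t s")
    case True
    then have "prefix t u"
      using that prefix_iff_length_le_subtree by metis
    with True that show ?thesis
      using T_forcing_uniform[OF pA] subtree_subset subtree_child_iff splitting_subtree_iff
      by (metis subsetD)
  next
    case False
    then have "\<not> prefix t u"
      using that prefix_iff_length_le_subtree by metis
    with False that have "s = u"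
      unfolding subtree_def by (metis mem_Collect_eq prefix_length_prefix prefix_order.antisym order.refl)
    then show ?thesis by simp
  qed
  show ?thesis
    unfolding T_forcing_def mem_Collect_eq case_prod_conv
    using perfect levels fully_splitting no_2 uniform by blast
qed

lemma branches_subtree_initial_segment:
  assumes "x \<in> branches (subtree p t)"
  shows "map x [0..<length t] = t"
proof -
  have "map x [0..<length t] \<in> subtree p t"
    using assms by (simp add: branches_def)
  then have "prefix t (map x [0..<length t])"
    using prefix_iff_length_le_subtree by simp
  then show ?thesis
    by (metis length_map diff_zero length_upt prefix_length_prefix prefix_order.antisym
        prefix_order.refl order.refl)
qed

subsection \<open>Branches built by a successor function\<close>

lemma branch_by_successor:
  assumes tree: "is_tree p" and "s0 \<in> p"
    and successor: "\<And>s. s \<in> p \<Longrightarrow> prefix s0 s \<Longrightarrow> s @ [nx s] \<in> p"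
  obtains x where "x \<in> branches p"
    and "\<And>i. length s0 \<le> i \<Longrightarrow> prefix s0 (map x [0..<i])"
    and "\<And>i. length s0 \<le> i \<Longrightarrow> x i = nx (map x [0..<i])"
proof -
  define f where "f k = ((\<lambda>s. s @ [nx s]) ^^ k) s0" for k
  have f_Suc: "f (Suc k) = f k @ [nx (f k)]" for k
    by (simp add: f_def)
  have f: "f k \<in> p \<and> prefix s0 (f k) \<and> length (f k) = length s0 + k" for k
    by (induction k) (auto simp: f_Suc f_def[of 0] \<open>s0 \<in> p\<close> successor prefix_order.trans)
  have f_mono: "prefix (f k) (f (k + d))" for k d
    by (induction d) (auto simp: f_Suc prefix_order.trans)
  (* the stages f k form a prefix chain, so x is their common limit *)
  define x where "x i = f (Suc i) ! i" for i
  have f_nth: "f k ! i = x i" if "i < length (f k)" for k i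
  proof -
    have "prefix (f k) (f (k + Suc i))" "prefix (f (Suc i)) (f (k + Suc i))"
      using f_mono[of k "Suc i"] f_mono[of "Suc i" k] by (simp_all add: add.commute)
    moreover have "i < length (f (Suc i))" using f[of "Suc i"] by simp
    ultimately show ?thesis
      using that unfolding x_def by (metis prefix_def nth_append)
  qed
  have f_eq: "f k = map x [0..<length (f k)]" for k
    by (rule nth_equalityI) (simp_all add: f_nth)
  have branch: "map x [0..<n] \<in> p" for n
  proof -
    have "map x [0..<n] = take n (f n)"
      using f[of n] by (subst f_eq) (simp add: take_map)
    then show ?thesis
      using tree_prefix_closed[OF tree] f[of n] take_is_prefix by metis
  qed
  have "x \<in> cantor3"
  proof -
    have "map x [0..<Suc i] \<in> seq3" for i
      using branch tree unfolding is_tree_def by blast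
    then show ?thesis by (simp add: cantor3_def seq3_def)
  qed
  have map_x_eq: "map x [0..<i] = f (i - length s0)" if "length s0 \<le> i" for i
    using that f[of "i - length s0"] f_eq[of "i - length s0"] by simp
  have x_eq: "x i = nx (f (i - length s0))" if "length s0 \<le> i" for i
  proof -
    define k where "k = i - length s0"
    have "length (f k) = i" using that f[of k] by (simp add: k_def)
    then have "x i = f (Suc k) ! i" using f_nth[of i "Suc k"] by (simp add: f_Suc)
    also have "\<dots> = nx (f k)" by (simp add: f_Suc \<open>length (f k) = i\<close>[symmetric])
    finally show ?thesis by (simp add: k_def)
  qed
  show thesis
  proof (rule that)
    show "x \<in> branches p"
      using branch \<open>x \<in> cantor3\<close> by (simp add: branches_def)
    show "prefix s0 (map x [0..<i])" "x i = nx (map x [0..<i])" if "length s0 \<le> i" for i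
      using map_x_eq[OF that] x_eq[OF that] f by simp_all
  qed
qed

lemma T_forcing_branch_avoiding_2_above_stem:
  assumes pA: "(p, A) \<in> T_forcing"
  obtains x where "x \<in> branches p" "\<And>i. length (stem p) \<le> i \<Longrightarrow> x i \<noteq> 2"
proof -
  have perfect: "perfect_tree p" using T_forcing_perfect[OF pA] .
  define nx where "nx s = (if splitting p s then 0 else SOME i. s @ [i] \<in> p)" for s
  have nx: "s @ [nx s] \<in> p \<and> nx s \<noteq> 2" if "s \<in> p" "prefix (stem p) s" for s
  proof (cases "splitting p s")
    case True
    then show ?thesis
      using T_forcing_fully_splitting[OF pA] by (simp add: nx_def fully_splitting_def)
  next
    case False
    obtain i where "s @ [i] \<in> p"
      using perfect_tree_child[OF perfect \<open>s \<in> p\<close>] .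
    then have "s @ [nx s] \<in> p"
      using False unfolding nx_def by (simp add: someI[of "\<lambda>i. s @ [i] \<in> p"])
    with T_forcing_no_2[OF pA that False] show ?thesis by auto
  qed
  have "is_tree p" using perfect by (simp add: perfect_tree_def)
  moreover have "stem p \<in> p"
    using stem_splitting[OF perfect] by (simp add: splitting_def)
  ultimately obtain x where x: "x \<in> branches p"
    and above_stem: "\<And>i. length (stem p) \<le> i \<Longrightarrow> prefix (stem p) (map x [0..<i])"
    and follows_nx: "\<And>i. length (stem p) \<le> i \<Longrightarrow> x i = nx (map x [0..<i])"
    using branch_by_successor[of p "stem p" nx] nx by blast
  show thesis
  proof (rule that[OF x])
    fix i assume "length (stem p) \<le> i"
    moreover have "map x [0..<i] \<in> p"
      using x by (simp add: branches_def)
    ultimately show "x i \<noteq> 2"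
      using nx above_stem follows_nx by simp
  qed
qed

theorem T_nowhere_dense_N_set: "T_nowhere_dense (N_set n)"
  unfolding T_nowhere_dense_def
proof
  fix pA assume "pA \<in> T_forcing"
  then obtain p A where pA: "(p, A) \<in> T_forcing" and [simp]: "pA = (p, A)"
    by (cases pA) simp
  obtain t where t: "splitting p t" "n \<le> length t"
    using perfect_tree_deep_splitting[OF T_forcing_perfect[OF pA]] by blast
  let ?t2 = "t @ [2]"
  have "?t2 \<in> p"
    using T_forcing_fully_splitting[OF pA t(1)] by (simp add: fully_splitting_def)
  have "x (length t) = 2" if "x \<in> branches (subtree p ?t2)" for x
  proof -
    have "map x [0..<Suc (length t)] = t @ [2]"
      using branches_subtree_initial_segment[OF that] by simp
    then show ?thesis by simp
  qed
  then have "branches (subtree p ?t2) \<inter> N_set n = {}"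
    using t(2) by (auto simp: N_set_def)
  moreover have "T_le (subtree p ?t2, {k \<in> A. length ?t2 \<le> k}) pA"
    using subtree_subset by (simp add: T_le_def)
  ultimately show "\<exists>q\<in>T_forcing. T_le q pA \<and> branches (fst q) \<inter> N_set n = {}"
    using subtree_T_forcing[OF pA \<open>?t2 \<in> p\<close>] by fastforce
qed

theorem not_T_nowhere_dense_Union_N_set: "\<not> T_nowhere_dense (\<Union>n. N_set n)"
proof -
  have "branches (fst q) \<inter> (\<Union>n. N_set n) \<noteq> {}" if "q \<in> T_forcing" for q
  proof -
    obtain p A where "q = (p, A)" by (cases q)
    with that have "(p, A) \<in> T_forcing" by simp
    then obtain x where "x \<in> branches p" "\<And>i. length (stem p) \<le> i \<Longrightarrow> x i \<noteq> 2"
      using T_forcing_branch_avoiding_2_above_stem by blast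
    then have "x \<in> branches (fst q) \<inter> N_set (length (stem p))"
      using \<open>q = (p, A)\<close> by (auto simp: N_set_def branches_def)
    then show ?thesis by blast
  qed
  then show ?thesis
    unfolding T_nowhere_dense_def using full_tree_T_forcing by blast
qed

theorem mainTheorem3:
  shows "(\<forall>n. T_nowhere_dense (N_set n)) \<and> \<not> T_nowhere_dense (\<Union>n. N_set n)"
  using T_nowhere_dense_N_set not_T_nowhere_dense_Union_N_set by blast

end
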